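(* Let $G'$ be a connected graph and $x,v\in V(G')$ distinct vertices with $N_{G'}[x]\subseteq N_{G'}[v]$. If $T'$ is a search tree on $G'$ in which $v$ is a descendant of $x$, then $x$ has at most one child in $T'$ and $p(T',x)$ is a search tree on $G'-x$.
   Context: $N[\cdot]$ denotes the closed neighbourhood. For a connected graph $G$, a search tree on $G$ is a rooted tree with vertex set $V(G)$ defined recursively: its root is some vertex $r\in V(G)$, and the children of $r$ are the roots of search trees on the connected components of $G-r$. Elimination: for a rooted tree $T$ and a vertex $u$ with at most one child, $p(T,u)$ is the rooted tree obtained as follows: if $u$ is the root with child $c$, delete $u$ and make $c$ the root; if $u$ is not the root, has exactly one child $c$ and parent $b$, delete $u$ and add the edge $bc$ (root unchanged); if $u$ is a leaf, delete $u$ (root unchanged). *)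

theory Defs
  imports Main
begin

text \<open>Subgraphs G - x are
induced subgraphs, represented by the vertex set V - {x} with the same E.\<close>

definition graph :: "'a set \<Rightarrow> ('a \<Rightarrow> 'a \<Rightarrow> bool) \<Rightarrow> bool" where
  "graph V E \<longleftrightarrow> finite V \<and> (\<forall>u w. E u w \<longrightarrow> E w u)
     \<and> (\<forall>u. \<not> E u u) \<and> (\<forall>u w. E u w \<longrightarrow> u \<in> V \<and> w \<in> V)"

definition reach :: "'a set \<Rightarrow> ('a \<Rightarrow> 'a \<Rightarrow> bool) \<Rightarrow> 'a \<Rightarrow> 'a \<Rightarrow> bool" where
  "reach S E u w \<longleftrightarrow> u \<in> S \<and> (\<lambda>a b. a \<in> S \<and> b \<in> S \<and> E a b)\<^sup>*\<^sup>* u w"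

definition connected_graph :: "'a set \<Rightarrow> ('a \<Rightarrow> 'a \<Rightarrow> bool) \<Rightarrow> bool" where
  "connected_graph S E \<longleftrightarrow> S \<noteq> {} \<and> (\<forall>u\<in>S. \<forall>w\<in>S. reach S E u w)"

definition components :: "'a set \<Rightarrow> ('a \<Rightarrow> 'a \<Rightarrow> bool) \<Rightarrow> 'a set set" where
  "components S E = {C. \<exists>u\<in>S. C = {w. reach S E u w}}"

definition closed_nbhd :: "'a set \<Rightarrow> ('a \<Rightarrow> 'a \<Rightarrow> bool) \<Rightarrow> 'a \<Rightarrow> 'a set" where
  "closed_nbhd V E x = insert x {w \<in> V. E x w}"

text \<open>A rooted tree: (vertex set, root, parent function).  The parent of a
non-root vertex w is par w; the value par r at the root is irrelevant.\<close>
type_synonym 'a rtree = "'a set \<times> 'a \<times> ('a \<Rightarrow> 'a)"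

definition children :: "'a rtree \<Rightarrow> 'a \<Rightarrow> 'a set" where
  "children T u = (case T of (S, r, par) \<Rightarrow> {w \<in> S - {r}. par w = u})"

inductive descendant :: "'a rtree \<Rightarrow> 'a \<Rightarrow> 'a \<Rightarrow> bool" for T where
  child: "w \<in> children T u \<Longrightarrow> descendant T u w"
| step: "descendant T u w \<Longrightarrow> w' \<in> children T w \<Longrightarrow> descendant T u w'"

inductive search_tree :: "'a set \<Rightarrow> ('a \<Rightarrow> 'a \<Rightarrow> bool) \<Rightarrow> 'a rtree \<Rightarrow> bool" where
  "r \<in> S \<Longrightarrow> connected_graph S E \<Longrightarrow>
   (\<forall>C\<in>components (S - {r}) E. \<exists>c\<in>C. par c = r \<and> search_tree C E (C, c, par)) \<Longrightarrow>
   search_tree S E (S, r, par)"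

text \<open>Elimination p(T,u) for a vertex u with at most one child: delete u; if u is
the root, its unique child becomes the root; otherwise the child (if any) of u
gets u's parent as its new parent.\<close>
definition elim :: "'a rtree \<Rightarrow> 'a \<Rightarrow> 'a rtree" where
  "elim T u = (case T of (S, r, par) \<Rightarrow>
     (S - {u},
      if u = r then (THE c. c \<in> S - {r} \<and> par c = u) else r,
      \<lambda>w. if par w = u then par u else par w))"

end

theory Submission
  imports Defs
begin

text \<open>Since \<open>N[x] \<subseteq> N[v]\<close>, any path through \<open>x\<close> can be rerouted through \<open>v\<close>, so
deleting \<open>x\<close> from a connected vertex set that also contains \<open>v\<close> keeps it connected.
Now induct on the search tree with root \<open>r\<close>.  If \<open>x = r\<close>, then \<open>G - x\<close> is connected,
hence has a single component: \<open>x\<close> has exactly one child, whose subtree is already a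
search tree on \<open>G - x\<close>.  Otherwise \<open>x\<close> and its descendant \<open>v\<close> lie in the same
component \<open>C\<close> of \<open>G - r\<close>; by induction, eliminating \<open>x\<close> in the subtree on \<open>C\<close> gives a
search tree on \<open>C - x\<close>, which is a component of \<open>G - r - x\<close>, while the other
components of \<open>G - r\<close> and their subtrees are untouched.\<close>

lemma reach_in_set:
  assumes "reach S E u w" shows "u \<in> S" "w \<in> S"
proof -
  have "(\<lambda>a b. a \<in> S \<and> b \<in> S \<and> E a b)\<^sup>*\<^sup>* u w" and "u \<in> S"
    using assms by (simp_all add: reach_def)
  then show "u \<in> S" "w \<in> S" by (induction rule: rtranclp_induct) simp_all
qed

lemma reach_refl: "u \<in> S \<Longrightarrow> reach S E u u"
  by (simp add: reach_def)

lemma reach_edge: "u \<in> S \<Longrightarrow> w \<in> S \<Longrightarrow> E u w \<Longrightarrow> reach S E u w"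
  by (simp add: reach_def r_into_rtranclp)

lemma reach_trans: "reach S E u w \<Longrightarrow> reach S E w z \<Longrightarrow> reach S E u z"
  by (auto simp: reach_def intro: rtranclp_trans)

lemma reach_sym:
  assumes "symp E" "reach S E u w" shows "reach S E w u"
proof -
  have "symp (\<lambda>a b. a \<in> S \<and> b \<in> S \<and> E a b)"
    using assms(1) by (auto simp: symp_def)
  then show ?thesis
    using assms(2) reach_in_set[OF assms(2)] by (auto simp: reach_def dest: sympD[OF symp_rtranclp])
qed

lemma reach_mono: "A \<subseteq> B \<Longrightarrow> reach A E u w \<Longrightarrow> reach B E u w"
  unfolding reach_def by (auto elim!: rtranclp_mono[THEN predicate2D, rotated])

lemma reach_avoid:
  assumes "reach A E u w" "\<not> reach A E u x" shows "reach (A - {x}) E u w"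
proof -
  have "(\<lambda>a b. a \<in> A \<and> b \<in> A \<and> E a b)\<^sup>*\<^sup>* u w" and u: "u \<in> A"
    using assms(1) by (simp_all add: reach_def)
  then show ?thesis
  proof (induction rule: rtranclp_induct)
    case base
    have "u \<noteq> x" using assms(2) reach_refl[OF u] by blast
    with u show ?case by (simp add: reach_refl)
  next
    case (step y z)
    have "reach A E u z"
      using step(1,2) u unfolding reach_def by (simp add: rtranclp.rtrancl_into_rtrancl)
    then have "z \<noteq> x" using assms(2) by blast
    have "reach (A - {x}) E u y" using step(3) u by blast
    moreover have "y \<in> A - {x}" using reach_in_set(2)[OF calculation] .
    ultimately show ?case
      using step(2) \<open>z \<noteq> x\<close> by (blast intro: reach_trans reach_edge)
  qed
qed

lemma closed_nbhd_subsetD: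
  "closed_nbhd S E x \<subseteq> closed_nbhd S E v \<Longrightarrow> y \<in> S \<Longrightarrow> E x y \<Longrightarrow> y = v \<or> E v y"
  by (auto simp: closed_nbhd_def)

lemma closed_nbhd_subset_restrict:
  "closed_nbhd S E x \<subseteq> closed_nbhd S E v \<Longrightarrow> A \<subseteq> S \<Longrightarrow> x \<in> A \<Longrightarrow>
   closed_nbhd A E x \<subseteq> closed_nbhd A E v"
  by (auto simp: closed_nbhd_def)

lemma connected_graph_remove_dominated:
  assumes "symp E" "connected_graph S E" "x \<in> S" "v \<in> S" "x \<noteq> v"
    and dom: "closed_nbhd S E x \<subseteq> closed_nbhd S E v"
  shows "connected_graph (S - {x}) E"
proof -
  have v: "v \<in> S - {x}" using assms by simp
  have from_v: "reach (S - {x}) E v w" if "w \<in> S - {x}" for w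
  proof -
    have "(\<lambda>a b. a \<in> S \<and> b \<in> S \<and> E a b)\<^sup>*\<^sup>* v w"
      using assms(2,4) that by (simp add: connected_graph_def reach_def)
    then show ?thesis using that
    proof (induction rule: rtranclp_induct)
      case base
      then show ?case using v by (simp add: reach_refl)
    next
      case (step y z)
      show ?case
      proof (cases "y = x")
        case True
        then have "z = v \<or> E v z" using step closed_nbhd_subsetD[OF dom] by blast
        then show ?thesis using v step.prems by (auto intro: reach_refl reach_edge)
      next
        case False
        then show ?thesis using step by (blast intro: reach_trans reach_edge)
      qed
    qed
  qed
  show ?thesis
    unfolding connected_graph_def
  proof (intro conjI ballI)
    fix u w assume "u \<in> S - {x}" "w \<in> S - {x}"
    then show "reach (S - {x}) E u w"
      using reach_sym[OF assms(1) from_v] from_v by (blast intro: reach_trans)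
  qed (use v in blast)
qed

lemma component_in_components: "u \<in> S \<Longrightarrow> {w. reach S E u w} \<in> components S E"
  by (auto simp: components_def)

lemma components_subset: "C \<in> components S E \<Longrightarrow> C \<subseteq> S"
  by (auto simp: components_def dest: reach_in_set)

lemma component_eq:
  assumes "symp E" "C \<in> components S E" "u \<in> C" shows "C = {w. reach S E u w}"
proof -
  obtain w where C: "C = {z. reach S E w z}" using assms(2) by (auto simp: components_def)
  then have "reach S E u w" using assms(3) reach_sym[OF assms(1)] by blast
  with C show ?thesis using assms(3) by (blast intro: reach_trans)
qed

lemma components_connected: "connected_graph S E \<Longrightarrow> components S E = {S}"
  by (auto simp: components_def connected_graph_def dest: reach_in_set)

lemma components_remove_vertex:
  assumes "symp E" "C0 \<in> components A E" "x \<in> C0" "connected_graph (C0 - {x}) E"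
  shows "components (A - {x}) E \<subseteq> insert (C0 - {x}) (components A E)"
proof
  fix C assume "C \<in> components (A - {x}) E"
  then obtain u where u: "u \<in> A - {x}" and C: "C = {w. reach (A - {x}) E u w}"
    unfolding components_def by blast
  have C_sub: "C \<subseteq> {w. reach A E u w}"
    unfolding C using reach_mono[of "A - {x}" A E u] by blast
  show "C \<in> insert (C0 - {x}) (components A E)"
  proof (cases "reach A E u x")
    case True
    have "u \<in> C0"
      using component_eq[OF assms(1-3)] reach_sym[OF assms(1) True] by blast
    then have C0: "C0 = {w. reach A E u w}" by (rule component_eq[OF assms(1,2)])
    have "C0 - {x} \<subseteq> C"
    proof
      fix w assume "w \<in> C0 - {x}"
      moreover have "u \<in> C0 - {x}" using \<open>u \<in> C0\<close> u by blast
      ultimately have "reach (C0 - {x}) E u w" using assms(4) by (simp add: connected_graph_def)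
      moreover have "C0 - {x} \<subseteq> A - {x}" using components_subset[OF assms(2)] by blast
      ultimately have "reach (A - {x}) E u w" by (rule reach_mono[rotated])
      then show "w \<in> C" unfolding C by simp
    qed
    moreover have "C \<subseteq> C0 - {x}"
      using C_sub C0 unfolding C by (auto dest: reach_in_set(2))
    ultimately show ?thesis by blast
  next
    case False
    then have "C = {w. reach A E u w}"
      using C_sub unfolding C by (auto intro: reach_avoid)
    moreover have "{w. reach A E u w} \<in> components A E"
      using u by (simp add: component_in_components)
    ultimately show ?thesis by simp
  qed
qed

lemma search_treeD:
  assumes "search_tree S E (S', r, par)"
  shows "S' = S" "r \<in> S" "connected_graph S E"
    and "C \<in> components (S - {r}) E \<Longrightarrow> \<exists>c\<in>C. par c = r \<and> search_tree C E (C, c, par)"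
  using assms by (cases rule: search_tree.cases; blast)+

lemma search_tree_induct [consumes 1, case_names search_tree]:
  assumes "search_tree S E (S, r, par)"
    and "\<And>S r par. search_tree S E (S, r, par) \<Longrightarrow> r \<in> S \<Longrightarrow>
      (\<forall>C\<in>components (S - {r}) E. \<exists>c\<in>C. par c = r \<and> search_tree C E (C, c, par) \<and> P C c par) \<Longrightarrow>
      P S r par"
  shows "P S r par"
proof -
  have "E' = E \<longrightarrow> P (fst T) (fst (snd T)) (snd (snd T))" if "search_tree S' E' T" for S' E' T
    using that
  proof (induction rule: search_tree.induct)
    case (1 r S E' par)
    then show ?case by (auto intro!: assms(2) search_tree.intros)
  qed
  then show ?thesis using assms(1) by fastforce
qed

lemma search_tree_parent_in:
  assumes "search_tree S E (S, r, par)" "w \<in> S - {r}" shows "par w \<in> S"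
  using assms
proof (induction arbitrary: w rule: search_tree_induct)
  case (search_tree S r par)
  define C where "C = {z. reach (S - {r}) E w z}"
  have C: "C \<in> components (S - {r}) E"
    unfolding C_def using search_tree.prems by (rule component_in_components)
  with search_tree.IH obtain c where c: "par c = r" "\<forall>z\<in>C - {c}. par z \<in> C"
    by blast
  have "w \<in> C" unfolding C_def using search_tree.prems by (simp add: reach_refl)
  then have "w = c \<or> par w \<in> C" using c(2) by blast
  then show ?case using c(1) search_tree.hyps(2) components_subset[OF C] by blast
qed

lemma search_tree_cong:
  assumes "search_tree S E (S, r, par)" "\<forall>w\<in>S - {r}. par' w = par w"
  shows "search_tree S E (S, r, par')"
  using assms
proof (induction arbitrary: par' rule: search_tree_induct)
  case (search_tree S r par)
  show ?case
  proof (rule search_tree.intros)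
    show "r \<in> S" "connected_graph S E"
      using search_treeD[OF search_tree.hyps(1)] by simp_all
    show "\<forall>C\<in>components (S - {r}) E. \<exists>c\<in>C. par' c = r \<and> search_tree C E (C, c, par')"
    proof
      fix C assume C: "C \<in> components (S - {r}) E"
      obtain c where c: "c \<in> C" "par c = r"
        and IH: "\<forall>par'. (\<forall>w\<in>C - {c}. par' w = par w) \<longrightarrow> search_tree C E (C, c, par')"
        using bspec[OF search_tree.IH C] by blast
      have agree: "\<forall>w\<in>C. par' w = par w"
        using components_subset[OF C] search_tree.prems by blast
      then have "search_tree C E (C, c, par')" using IH by blast
      moreover have "par' c = r" using agree c by simp
      ultimately show "\<exists>c\<in>C. par' c = r \<and> search_tree C E (C, c, par')"
        using c(1) by blast
    qed
  qed
qed

lemma search_tree_child_in_component: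
  assumes st: "search_tree S E (S, r, par)" and "symp E"
    and C: "C \<in> components (S - {r}) E" and w: "w \<in> S - {r}" and "par w \<in> C"
  shows "w \<in> C"
proof -
  define D where "D = {z. reach (S - {r}) E w z}"
  have D: "D \<in> components (S - {r}) E"
    unfolding D_def using w by (rule component_in_components)
  have "w \<in> D" unfolding D_def using w by (simp add: reach_refl)
  obtain d where "par d = r" "search_tree D E (D, d, par)"
    using search_treeD(4)[OF st D] by blast
  moreover have "par w \<noteq> r" using \<open>par w \<in> C\<close> components_subset[OF C] by blast
  ultimately have "par w \<in> D"
    using \<open>w \<in> D\<close> search_tree_parent_in[of D E d par w] by blast
  then have "D = {z. reach (S - {r}) E (par w) z}"
    by (rule component_eq[OF \<open>symp E\<close> D])
  also have "\<dots> = C"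
    by (rule component_eq[OF \<open>symp E\<close> C \<open>par w \<in> C\<close>, symmetric])
  finally have "D = C" .
  with \<open>w \<in> D\<close> show ?thesis by simp
qed

lemma children_iff: "w \<in> children (S, r, par) u \<longleftrightarrow> w \<in> S - {r} \<and> par w = u"
  by (simp add: children_def)

lemma children_in_component:
  assumes st: "search_tree S E (S, r, par)" and "symp E"
    and C: "C \<in> components (S - {r}) E" and "par c = r" and "u \<in> C"
  shows "children (S, r, par) u = children (C, c, par) u"
proof -
  have "u \<noteq> r" using \<open>u \<in> C\<close> components_subset[OF C] by blast
  have "w \<in> C" if "w \<in> S - {r}" "par w = u" for w
    using search_tree_child_in_component[OF st \<open>symp E\<close> C] that \<open>u \<in> C\<close> by simp
  then show ?thesis
    using components_subset[OF C] \<open>par c = r\<close> \<open>u \<noteq> r\<close> by (auto simp: children_iff)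
qed

lemma descendant_not_root: "descendant (S, r, par) u w \<Longrightarrow> w \<in> S - {r}"
  by (induction rule: descendant.induct) (simp_all add: children_iff)

lemma descendant_in_component:
  assumes st: "search_tree S E (S, r, par)" and "symp E"
    and C: "C \<in> components (S - {r}) E" and "par c = r" and "u \<in> C"
    and "descendant (S, r, par) u w"
  shows "descendant (C, c, par) u w \<and> w \<in> C"
  using assms(6,5)
proof (induction rule: descendant.induct)
  case (child w u)
  then have "w \<in> children (C, c, par) u"
    using children_in_component[OF st \<open>symp E\<close> C \<open>par c = r\<close>] by simp
  then show ?case by (auto simp: children_iff intro: descendant.child)
next
  case (step u w w')
  then have "w' \<in> children (C, c, par) w"
    using children_in_component[OF st \<open>symp E\<close> C \<open>par c = r\<close>] by simp
  then show ?case using step.IH step.prems by (auto simp: children_iff intro: descendant.step)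
qed

definition bypass :: "('a \<Rightarrow> 'a) \<Rightarrow> 'a \<Rightarrow> 'a \<Rightarrow> 'a" where
  "bypass par x w = (if par w = x then par x else par w)"

lemma elim_nonroot: "x \<noteq> r \<Longrightarrow> elim (S, r, par) x = (S - {x}, r, bypass par x)"
  by (simp add: elim_def bypass_def [abs_def])

lemma elim_root:
  assumes "children (S, r, par) r = {c}"
  shows "elim (S, r, par) r = (S - {r}, c, bypass par r)"
proof -
  have "c' \<in> S - {r} \<and> par c' = r \<longleftrightarrow> c' = c" for c'
    using assms unfolding set_eq_iff children_iff by blast
  then have "(THE c. c \<in> S - {r} \<and> par c = r) = c" by simp
  then show ?thesis by (simp add: elim_def bypass_def [abs_def])
qed

lemma search_tree_dominated_root:
  assumes st: "search_tree S E (S, r, par)" and "symp E" and v: "v \<in> S - {r}"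
    and dom: "closed_nbhd S E r \<subseteq> closed_nbhd S E v"
  shows "\<exists>c. children (S, r, par) r = {c} \<and> search_tree (S - {r}) E (S - {r}, c, bypass par r)"
proof -
  have "r \<noteq> v" "v \<in> S" using v by auto
  then have "connected_graph (S - {r}) E"
    using connected_graph_remove_dominated[OF \<open>symp E\<close> search_treeD(3,2)[OF st] _ _ dom]
    by blast
  then have "S - {r} \<in> components (S - {r}) E" by (simp add: components_connected)
  then obtain c where c: "par c = r" "search_tree (S - {r}) E (S - {r}, c, par)"
    using search_treeD(4)[OF st] by blast
  have "c \<in> S - {r}" by (rule search_treeD(2)[OF c(2)])
  moreover have not_child: "par w \<noteq> r" if "w \<in> S - {r} - {c}" for w
    using search_tree_parent_in[OF c(2) that] by blast
  ultimately have "children (S, r, par) r = {c}"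
    using c(1) unfolding set_eq_iff children_iff by blast
  moreover have "search_tree (S - {r}) E (S - {r}, c, bypass par r)"
    using search_tree_cong[OF c(2)] not_child by (simp add: bypass_def)
  ultimately show ?thesis by blast
qed

lemma search_tree_replace_component:
  assumes st: "search_tree S E (S, r, par)" and "symp E"
    and C0: "C0 \<in> components (S - {r}) E" and "x \<in> C0"
    and conn: "connected_graph (S - {x}) E"
    and sub: "search_tree (C0 - {x}) E (C0 - {x}, r0, bypass par x)" and "bypass par x r0 = r"
  shows "search_tree (S - {x}) E (S - {x}, r, bypass par x)"
proof (rule search_tree.intros)
  have "x \<noteq> r" using \<open>x \<in> C0\<close> components_subset[OF C0] by blast
  then show "r \<in> S - {x}" using search_treeD(2)[OF st] by blast
  show "connected_graph (S - {x}) E" by (rule conn)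
  show "\<forall>C\<in>components (S - {x} - {r}) E. \<exists>c\<in>C. bypass par x c = r \<and> search_tree C E (C, c, bypass par x)"
  proof
    fix C assume "C \<in> components (S - {x} - {r}) E"
    moreover have "S - {x} - {r} = S - {r} - {x}" by blast
    ultimately have C: "C \<in> components (S - {r} - {x}) E" by simp
    have "C = C0 - {x} \<or> C \<in> components (S - {r}) E"
      using components_remove_vertex[OF \<open>symp E\<close> C0 \<open>x \<in> C0\<close> search_treeD(3)[OF sub]] C
      by blast
    then show "\<exists>c\<in>C. bypass par x c = r \<and> search_tree C E (C, c, bypass par x)"
    proof
      assume "C = C0 - {x}"
      then show ?thesis using sub search_treeD(2)[OF sub] \<open>bypass par x r0 = r\<close> by blast
    next
      assume C': "C \<in> components (S - {r}) E"
      have "x \<notin> C" using components_subset[OF C] by blast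
      obtain c where c: "par c = r" "search_tree C E (C, c, par)"
        using search_treeD(4)[OF st C'] by blast
      have "bypass par x w = par w" if "w \<in> C - {c}" for w
        using search_tree_parent_in[OF c(2) that] \<open>x \<notin> C\<close> unfolding bypass_def by auto
      then have "search_tree C E (C, c, bypass par x)"
        using search_tree_cong[OF c(2)] by blast
      moreover have "bypass par x c = r" using c(1) \<open>x \<noteq> r\<close> by (simp add: bypass_def)
      ultimately show ?thesis using search_treeD(2)[OF c(2)] by blast
    qed
  qed
qed

lemma search_tree_elim_in_component:
  assumes st: "search_tree S E (S, r, par)" and "symp E"
    and C0: "C0 \<in> components (S - {r}) E" and "par c0 = r" and st0: "search_tree C0 E (C0, c0, par)"
    and "x \<in> C0" and "v \<in> C0" and "x \<noteq> v" and dom: "closed_nbhd S E x \<subseteq> closed_nbhd S E v"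
    and sub: "search_tree (C0 - {x}) E (elim (C0, c0, par) x)"
  shows "search_tree (S - {x}) E (elim (S, r, par) x)"
proof -
  have "x \<noteq> r" "x \<in> S" "v \<in> S" using \<open>x \<in> C0\<close> \<open>v \<in> C0\<close> components_subset[OF C0] by blast+
  obtain r0 where r0: "elim (C0, c0, par) x = (C0 - {x}, r0, bypass par x)" "bypass par x r0 = r"
  proof (cases "x = c0")
    case True
    have "closed_nbhd C0 E x \<subseteq> closed_nbhd C0 E v"
      using closed_nbhd_subset_restrict[OF dom _ \<open>x \<in> C0\<close>] components_subset[OF C0] by blast
    then obtain c1 where c1: "children (C0, c0, par) c0 = {c1}"
      using search_tree_dominated_root[OF st0 \<open>symp E\<close>] \<open>v \<in> C0\<close> \<open>x \<noteq> v\<close> True by blast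
    then have "bypass par x c1 = r"
      using True \<open>par c0 = r\<close> unfolding set_eq_iff children_iff bypass_def by auto
    moreover have "elim (C0, c0, par) x = (C0 - {x}, c1, bypass par x)"
      using elim_root[OF c1] True by simp
    ultimately show thesis by (rule that[rotated])
  next
    case False
    have "bypass par x c0 = r" using \<open>par c0 = r\<close> \<open>x \<noteq> r\<close> by (simp add: bypass_def)
    with elim_nonroot[OF False] show thesis by (rule that)
  qed
  have "connected_graph (S - {x}) E"
    using connected_graph_remove_dominated[OF \<open>symp E\<close> search_treeD(3)[OF st]
        \<open>x \<in> S\<close> \<open>v \<in> S\<close> \<open>x \<noteq> v\<close> dom] .
  then show ?thesis
    using search_tree_replace_component[OF st \<open>symp E\<close> C0 \<open>x \<in> C0\<close>] sub r0 elim_nonroot[OF \<open>x \<noteq> r\<close>]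
    by simp
qed

lemma search_tree_elim_dominated:
  assumes "search_tree S E (S, r, par)" and "symp E" and "x \<in> S" and "x \<noteq> v"
    and "closed_nbhd S E x \<subseteq> closed_nbhd S E v" and "descendant (S, r, par) x v"
  shows "card (children (S, r, par) x) \<le> 1 \<and> search_tree (S - {x}) E (elim (S, r, par) x)"
  using assms(1,3,5,6)
proof (induction rule: search_tree_induct)
  case (search_tree S r par)
  note st = search_tree.hyps(1) and dom = search_tree.prems(2)
  have v: "v \<in> S - {r}" by (rule descendant_not_root[OF search_tree.prems(3)])
  show ?case
  proof (cases "x = r")
    case True
    then obtain c where c: "children (S, r, par) r = {c}"
      and "search_tree (S - {r}) E (S - {r}, c, bypass par r)"
      using search_tree_dominated_root[OF st \<open>symp E\<close> v] dom by blast
    with True show ?thesis by (simp add: elim_root[OF c])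
  next
    case False
    define C0 where "C0 = {w. reach (S - {r}) E x w}"
    have "x \<in> S - {r}" using search_tree.prems(1) False by blast
    then have C0: "C0 \<in> components (S - {r}) E" and "x \<in> C0"
      unfolding C0_def by (simp_all add: component_in_components reach_refl)
    obtain c0 where c0: "par c0 = r" "search_tree C0 E (C0, c0, par)"
      and IH: "x \<in> C0 \<longrightarrow> closed_nbhd C0 E x \<subseteq> closed_nbhd C0 E v \<longrightarrow>
        descendant (C0, c0, par) x v \<longrightarrow>
        card (children (C0, c0, par) x) \<le> 1 \<and> search_tree (C0 - {x}) E (elim (C0, c0, par) x)"
      using bspec[OF search_tree.IH C0] by blast
    have "descendant (C0, c0, par) x v" and "v \<in> C0"
      using descendant_in_component[OF st \<open>symp E\<close> C0 c0(1) \<open>x \<in> C0\<close> search_tree.prems(3)]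
      by simp_all
    moreover have "closed_nbhd C0 E x \<subseteq> closed_nbhd C0 E v"
      using closed_nbhd_subset_restrict[OF dom _ \<open>x \<in> C0\<close>] components_subset[OF C0] by blast
    ultimately have "card (children (C0, c0, par) x) \<le> 1"
      and "search_tree (C0 - {x}) E (elim (C0, c0, par) x)"
      using IH \<open>x \<in> C0\<close> by simp_all
    moreover have "children (S, r, par) x = children (C0, c0, par) x"
      by (rule children_in_component[OF st \<open>symp E\<close> C0 c0(1) \<open>x \<in> C0\<close>])
    ultimately show ?thesis
      using search_tree_elim_in_component[OF st \<open>symp E\<close> C0 c0 \<open>x \<in> C0\<close> \<open>v \<in> C0\<close>
          \<open>x \<noteq> v\<close> dom]
      by simp
  qed
qed

theorem lemma2p1:
  fixes V :: "'a set" and E :: "'a \<Rightarrow> 'a \<Rightarrow> bool" and x v :: 'a and T :: "'a rtree"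
  assumes "graph V E" and "connected_graph V E"
    and "x \<in> V" and "v \<in> V" and "x \<noteq> v"
    and "closed_nbhd V E x \<subseteq> closed_nbhd V E v"
    and "search_tree V E T"
    and "descendant T x v"
  shows "card (children T x) \<le> 1 \<and> search_tree (V - {x}) E (elim T x)"
proof -
  obtain S r par where T: "T = (S, r, par)" by (cases T)
  with assms(7) have "search_tree V E (S, r, par)" by simp
  moreover from this have "S = V" by (rule search_treeD(1))
  ultimately have st: "search_tree V E (V, r, par)" and desc: "descendant (V, r, par) x v"
    using assms(8) T by simp_all
  have "symp E" using assms(1) by (simp add: graph_def symp_def)
  from search_tree_elim_dominated[OF st this assms(3,5,6) desc] show ?thesis
    using T \<open>S = V\<close> by simp
qed

end
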